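(* Consider a proof-of-work blockchain using the clock-drift-adjusted tie-breaking rule based on partial PoW described in the context, adopted by all honest miners. Suppose an attacker performs a Match against post-generated block. Then, on average, the proportion $\gamma$ of honest miners (by hashrate) that mine on the attacker's chain satisfies $$\gamma \le 1 - \frac{1}{2}\exp\!\left(-\frac{\Delta_B\frac{2(1+D)^2}{(1-D)^2} + \Delta_P\frac{2}{1-D}}{T}\right).$$
   Context: Setting. $T$ is the average block generation interval of the whole network. A block header $h$ is a valid block if $H(h)<\mathit{Target}$, where $H$ is a cryptographic hash function. A partial PoW is a header with $H(h)<n\,\mathit{Target}$, where $n>1$ is a fixed difficulty adjuster. Miners publish partial PoWs when found. Every block reaches every miner less than $\Delta_B$ (real time) after publication, and every partial PoW less than $\Delta_P$ after publication. The attacker can instantly learn of and instantly deliver any message. Clock drift. The clock drift of miner $i$ is $d_i=(x_m-x_r)/x_r$, where $x_m$ is the measured and $x_r$ the actual elapsed time. There is a known $D\in(0,1)$ with $|d_i|<D$ for all miners $i$. Rule, with all durations measured on the miner's own clock. The acceptance window is $w=\Delta_B(1+D)$. A valid partial PoW is regarded as sufficiently shared once $2\Delta_B(1+D)$ has elapsed since its arrival. Each block contains a shared partial PoW, namely the XOR of the hashes of a set of partial PoWs. An honest miner uses for this set the valid partial PoWs for which $(\Delta_P + 2\Delta_B(1+D)/(1-D))(1+D)$ has elapsed since arrival. The set is transmitted with the block. Chain ties. A chain tie occurs when the predefined fork choice rule (e.g. longest chain) does not give a unique chain. A chain's arrival time is that of its head. A miner considers tied chains arriving within $w$ of the earliest-arriving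 tied chain. Each such chain gets weight $-1$ if some partial PoW in the union of its blocks' sets is not valid and sufficiently shared; otherwise its weight is the size of that union. The miner mines on a chain of maximum weight, breaking remaining ties at random. Attack. In a Match against post-generated block, the attacker withholds its generated block and publishes it when an honest miner publishes a competing block, creating a chain tie. *)

theory Defs
  imports "HOL-Probability.Probability"
begin

text \<open>
Miner i has a linear clock with constant drift d i,
   so the duration measured by miner i between real times a and e is (1 + d i) * (e - a).
 - Arrival functions have type 'p => real option (None = never arrives).
 - Delta_B, Delta_P, D are the parameters of the context; w = Delta_B * (1 + D).
\<close>

definition valid_ppow :: "('p \<Rightarrow> real) \<Rightarrow> real \<Rightarrow> real \<Rightarrow> 'p \<Rightarrow> bool" where
  "valid_ppow H n Target p \<longleftrightarrow> H p < n * Target"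

definition sufficiently_shared ::
  "('p \<Rightarrow> bool) \<Rightarrow> real \<Rightarrow> real \<Rightarrow> real \<Rightarrow> ('p \<Rightarrow> real option) \<Rightarrow> real \<Rightarrow> 'p \<Rightarrow> bool" where
  "sufficiently_shared valid dB D d arri e p \<longleftrightarrow>
     valid p \<and> (\<exists>a. arri p = Some a \<and> a \<le> e \<and> (1 + d) * (e - a) \<ge> 2 * dB * (1 + D))"

text \<open>Weight of a tied chain whose blocks' sets have union U.\<close>
definition chain_weight ::
  "('p \<Rightarrow> bool) \<Rightarrow> real \<Rightarrow> real \<Rightarrow> real \<Rightarrow> ('p \<Rightarrow> real option) \<Rightarrow> real \<Rightarrow> 'p set \<Rightarrow> real" where
  "chain_weight valid dB D d arri e U =
     (if \<forall>p\<in>U. sufficiently_shared valid dB D d arri e p then real (card U) else -1)"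

text \<open>Set of partial PoWs an honest miner (drift d, arrival function arrh) puts into
  the block it generates at real time t.\<close>
definition honest_set ::
  "('p \<Rightarrow> bool) \<Rightarrow> real \<Rightarrow> real \<Rightarrow> real \<Rightarrow> real \<Rightarrow> ('p \<Rightarrow> real option) \<Rightarrow> real \<Rightarrow> 'p set" where
  "honest_set valid dB dP D d arrh t =
     {p. valid p \<and> (\<exists>a. arrh p = Some a \<and> a \<le> t \<and>
            (1 + d) * (t - a) \<ge> (dP + 2 * dB * (1 + D) / (1 - D)) * (1 + D))}"

text \<open>Probability that an honest miner (drift d, partial-PoW arrival function arri)
  mines on the attacker's chain, when the attacker's chain head arrives at real time bA,
  the honest chain head at bH, and the unions of the chains' sets are UA and UH.\<close>
definition prob_on_attacker ::
  "('p \<Rightarrow> bool) \<Rightarrow> real \<Rightarrow> real \<Rightarrow> real \<Rightarrow> ('p \<Rightarrow> real option) \<Rightarrow> real \<Rightarrow> real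
     \<Rightarrow> 'p set \<Rightarrow> 'p set \<Rightarrow> real" where
  "prob_on_attacker valid dB D d arri bA bH UA UH =
     (let w = dB * (1 + D);
          f = min bA bH;
          e = f + w / (1 + d);
          consA = ((1 + d) * (bA - f) \<le> w);
          consH = ((1 + d) * (bH - f) \<le> w);
          wA = chain_weight valid dB D d arri e UA;
          wH = chain_weight valid dB D d arri e UH
      in if consA \<and> consH then (if wA > wH then 1 else if wA = wH then 1/2 else 0)
         else if consA then 1 else 0)"

text \<open>Proportion (by hashrate) of honest miners mining on the attacker's chain (expected
  over the random tie-breaking), when the honest competing block is generated and
  published by miner h at real time tH.  C is the union of the sets of the common
  prefix, SA the set in the attacker's block.\<close>
definition match_gamma ::
  "'m set \<Rightarrow> ('m \<Rightarrow> real) \<Rightarrow> ('m \<Rightarrow> real) \<Rightarrow> ('p \<Rightarrow> bool) \<Rightarrow> real \<Rightarrow> real \<Rightarrow> real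
    \<Rightarrow> 'p set \<Rightarrow> 'p set \<Rightarrow> 'm \<Rightarrow> real \<Rightarrow> ('m \<Rightarrow> 'p \<Rightarrow> real option)
    \<Rightarrow> ('m \<Rightarrow> real) \<Rightarrow> ('m \<Rightarrow> real) \<Rightarrow> real" where
  "match_gamma M hr drift valid dB dP D C SA h tH arr bA bH =
     (\<Sum>i\<in>M. hr i * prob_on_attacker valid dB D (drift i) (arr i) (bA i) (bH i)
                      (C \<union> SA) (C \<union> honest_set valid dB dP D (drift h) (arr h) tH))"

end

theory Submission
  imports Defs
begin

text \<open>
Fix the delay g between the attacker's block and the competing honest block, and an honest
miner. Both blocks reach the miner within Delta_B, so both tied chains are considered,
and the miner sides with the attacker with probability at most 1/2 unless the attacker's
chain is strictly heavier. In that case every partial PoW of the attacker's block was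
sufficiently shared, hence published before the honest block, while every partial PoW of
the honest block is sufficiently shared too; so the attacker's block contains a partial PoW
missing from the honest block. The honest miner would have included it had it been
published at least K before the honest block, with K the numerator of the exponent, so g
lies in an interval of length K that depends only on the attacker's publication schedule.
An exponential delay of rate (1 - alpha)/T hits such an interval with probability at most
1 - exp(-K/T) by memorylessness, whence gamma <= 1/2 + 1/2 (1 - exp(-K/T)).
\<close>

definition decision_time :: "real \<Rightarrow> real \<Rightarrow> real \<Rightarrow> real \<Rightarrow> real \<Rightarrow> real" where
  "decision_time dB D d bA bH = min bA bH + dB * (1 + D) / (1 + d)"

text \<open>By attack_window_eq: dP for a partial PoW to reach the honest block's miner, plus the
  longest real time that miner waits before including it.\<close>
definition attack_window :: "real \<Rightarrow> real \<Rightarrow> real \<Rightarrow> real" where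
  "attack_window dB dP D = dB * (2 * (1 + D)^2 / (1 - D)^2) + dP * (2 / (1 - D))"

lemma attack_window_eq:
  assumes "D \<noteq> 1"
  shows "attack_window dB dP D = dP + (dP + 2 * dB * (1 + D) / (1 - D)) * (1 + D) / (1 - D)"
proof -
  define r where "r = (1 + D) / (1 - D)"
  have r_twice: "2 / (1 - D) = 1 + r" using assms by (simp add: r_def field_simps)
  have r_square: "(1 + D)^2 / (1 - D)^2 = r^2" by (simp add: r_def power_divide)
  have "attack_window dB dP D = 2 * dB * ((1 + D)^2 / (1 - D)^2) + dP * (2 / (1 - D))"
    by (simp add: attack_window_def)
  also have "\<dots> = dP + (dP + 2 * dB * r) * r"
    unfolding r_twice r_square by (simp add: algebra_simps power2_eq_square)
  finally show ?thesis by (simp add: r_def)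
qed

lemma attack_window_nonneg: "0 \<le> dB \<Longrightarrow> 0 \<le> dP \<Longrightarrow> D < 1 \<Longrightarrow> 0 \<le> attack_window dB dP D"
  by (simp add: attack_window_def)

section \<open>Timing under clock drift\<close>

lemma drift_scaled_le:
  fixes d D x :: real
  assumes "\<bar>d\<bar> < D" "0 \<le> x"
  shows "(1 - D) * x \<le> (1 + d) * x" and "(1 + d) * x \<le> (1 + D) * x"
  using assms by (auto intro!: mult_right_mono)

lemma decision_time_ge:
  assumes "\<bar>d\<bar> < D" "D < 1" "0 \<le> dB"
  shows "min bA bH \<le> decision_time dB D d bA bH"
  using assms by (simp add: decision_time_def)

lemma arrival_before_window_if_sufficiently_shared:
  assumes "\<bar>d\<bar> < D" "D < 1" "0 \<le> dB"
    and "sufficiently_shared valid dB D d arri (decision_time dB D d bA bH) p"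
  obtains a where "valid p" "arri p = Some a" "a \<le> min bA bH - dB"
proof -
  define f where "f = min bA bH"
  obtain a where a: "valid p" "arri p = Some a"
      "2 * dB * (1 + D) \<le> (1 + d) * (decision_time dB D d bA bH - a)"
    using assms(4) by (auto simp: sufficiently_shared_def)
  have "0 < 1 + d" using assms(1,2) by simp
  then have "(1 + d) * (decision_time dB D d bA bH - a) = (1 + d) * (f - a) + dB * (1 + D)"
    by (simp add: decision_time_def f_def field_simps)
  then have lower: "dB * (1 + D) \<le> (1 + d) * (f - a)" using a(3) by simp
  moreover have "0 \<le> dB * (1 + D)" using assms(1,3) by simp
  ultimately have "0 \<le> (1 + d) * (f - a)" by linarith
  then have "0 \<le> f - a" using \<open>0 < 1 + d\<close> by (simp add: zero_le_mult_iff)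
  then have "dB * (1 + D) \<le> (1 + D) * (f - a)"
    using lower drift_scaled_le(2)[OF assms(1)] by (meson order_trans)
  moreover have "0 < 1 + D" using assms(1) by (auto simp: abs_less_iff)
  ultimately have "dB \<le> f - a" by (simp add: mult.commute)
  then show ?thesis using that a(1,2) by (simp add: f_def)
qed

lemma arrival_before_if_in_honest_set:
  assumes "\<bar>d\<bar> < D" "D < 1" "0 \<le> dB" "0 \<le> dP"
    and "p \<in> honest_set valid dB dP D d arrh t"
  obtains a where "valid p" "arrh p = Some a" "a \<le> t - (dP + 2 * dB * (1 + D) / (1 - D))"
proof -
  define Q where "Q = dP + 2 * dB * (1 + D) / (1 - D)"
  obtain a where a: "valid p" "arrh p = Some a" "Q * (1 + D) \<le> (1 + d) * (t - a)"
    using assms(5) by (auto simp: honest_set_def Q_def)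
  have "0 \<le> Q" using assms(1-4) by (simp add: Q_def)
  then have "(1 + d) * Q \<le> (1 + D) * Q" by (rule drift_scaled_le(2)[OF assms(1)])
  also have "\<dots> \<le> (1 + d) * (t - a)" using a(3) by (simp add: mult.commute)
  finally have "(1 + d) * Q \<le> (1 + d) * (t - a)" .
  moreover have "0 < 1 + d" using assms(1,2) by simp
  ultimately have "Q \<le> t - a" by simp
  then show ?thesis using that a(1,2) by (simp add: Q_def)
qed

lemma sufficiently_shared_if_arrived_early:
  assumes "\<bar>d\<bar> < D" "D < 1" "0 \<le> dB"
    and "valid p" "arri p = Some a" "a \<le> e - 2 * dB * (1 + D) / (1 - D)"
  shows "sufficiently_shared valid dB D d arri e p"
proof -
  have "0 \<le> 2 * dB * (1 + D) / (1 - D)" using assms(1-3) by simp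
  then have "a \<le> e" using assms(6) by simp
  have "2 * dB * (1 + D) \<le> (1 - D) * (e - a)" using assms(2,6) by (simp add: field_simps)
  also have "\<dots> \<le> (1 + d) * (e - a)" using drift_scaled_le(1)[OF assms(1)] \<open>a \<le> e\<close> by simp
  finally show ?thesis using assms(4,5) \<open>a \<le> e\<close> by (auto simp: sufficiently_shared_def)
qed

lemma late_if_not_in_honest_set:
  assumes "\<bar>d\<bar> < D" "D < 1" "0 \<le> dB" "0 \<le> dP"
    and "valid p" "arrh p = Some a" "a < tp + dP"
    and "p \<notin> honest_set valid dB dP D d arrh t"
  shows "t < tp + attack_window dB dP D"
proof -
  define Q where "Q = dP + 2 * dB * (1 + D) / (1 - D)"
  have window: "attack_window dB dP D = dP + Q * (1 + D) / (1 - D)"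
    using assms(2) by (simp add: attack_window_eq Q_def)
  show ?thesis
  proof (cases "a \<le> t")
    case True
    have "(1 + d) * (t - a) < Q * (1 + D)"
      using assms(5,6,8) True by (auto simp: honest_set_def Q_def)
    moreover have "(1 - D) * (t - a) \<le> (1 + d) * (t - a)"
      using drift_scaled_le(1)[OF assms(1)] True by simp
    ultimately have "t - a < Q * (1 + D) / (1 - D)" using assms(2) by (simp add: field_simps)
    then show ?thesis using assms(7) window by simp
  next
    case False
    have "0 \<le> Q * (1 + D) / (1 - D)" using assms(1-4) by (simp add: Q_def)
    then show ?thesis using False assms(7) window by simp
  qed
qed

lemma honest_set_subset_found:
  assumes "\<And>p a. valid p \<Longrightarrow> arrh p = Some a \<Longrightarrow> found p \<le> a"
  shows "honest_set valid dB dP D d arrh t \<subseteq> {p. valid p \<and> found p \<le> t}"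
  using assms by (fastforce simp: honest_set_def)

section \<open>Tie-breaking\<close>

lemma prob_on_attacker_le_one: "prob_on_attacker valid dB D d arri bA bH UA UH \<le> 1"
  by (simp add: prob_on_attacker_def Let_def)

lemma prob_on_attacker_le_half:
  assumes "\<bar>d\<bar> < D"
    and "t \<le> bA" "bA < t + dB" "t \<le> bH" "bH < t + dB"
    and "chain_weight valid dB D d arri (decision_time dB D d bA bH) UA
           \<le> chain_weight valid dB D d arri (decision_time dB D d bA bH) UH"
  shows "prob_on_attacker valid dB D d arri bA bH UA UH \<le> 1/2"
proof -
  have considered: "(1 + d) * (b - min bA bH) \<le> dB * (1 + D)" if "b \<in> {bA, bH}" for b
  proof -
    have "0 \<le> b - min bA bH" "b - min bA bH \<le> dB" using that assms(2-5) by auto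
    then have "(1 + d) * (b - min bA bH) \<le> (1 + D) * (b - min bA bH)"
      using drift_scaled_le(2)[OF assms(1)] by blast
    also have "\<dots> \<le> (1 + D) * dB"
      using assms(1) \<open>b - min bA bH \<le> dB\<close> by (intro mult_left_mono) auto
    finally show ?thesis by (simp add: mult.commute)
  qed
  then show ?thesis
    using assms(6) by (simp add: prob_on_attacker_def decision_time_def Let_def)
qed

lemma sufficiently_shared_if_chain_weight_less:
  assumes "chain_weight valid dB D d arri e UH < chain_weight valid dB D d arri e UA" "p \<in> UA"
  shows "sufficiently_shared valid dB D d arri e p"
  using assms by (auto simp: chain_weight_def split: if_splits)

lemma not_subset_if_chain_weight_less:
  assumes "finite UH" "\<forall>p\<in>UH. sufficiently_shared valid dB D d arri e p"
    and "chain_weight valid dB D d arri e UH < chain_weight valid dB D d arri e UA"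
  shows "\<not> UA \<subseteq> UH"
proof
  assume "UA \<subseteq> UH"
  then have "card UA \<le> card UH" using assms(1) by (rule card_mono[rotated])
  moreover have "\<forall>p\<in>UA. sufficiently_shared valid dB D d arri e p"
    using sufficiently_shared_if_chain_weight_less[OF assms(3)] by blast
  ultimately show False using assms(2,3) by (simp add: chain_weight_def)
qed

lemma weighted_mean_le:
  fixes w f :: "'a \<Rightarrow> real"
  assumes "\<forall>i\<in>M. 0 \<le> w i" "(\<Sum>i\<in>M. w i) = 1" "\<forall>i\<in>M. f i \<le> c"
  shows "(\<Sum>i\<in>M. w i * f i) \<le> c"
proof -
  have "(\<Sum>i\<in>M. w i * f i) \<le> (\<Sum>i\<in>M. w i * c)"
    using assms(1,3) by (intro sum_mono mult_left_mono) auto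
  also have "\<dots> = c" using assms(2) by (simp add: sum_distrib_right[symmetric])
  finally show ?thesis .
qed

section \<open>Exponentially distributed delay\<close>

lemma erlang_CDF_0_increment_le:
  assumes "0 < l" "0 \<le> K"
  shows "erlang_CDF 0 l (s + K) - erlang_CDF 0 l s \<le> 1 - exp (- l * K)"
proof (cases "0 \<le> s")
  case True
  have "exp (- l * s) - exp (- l * (s + K)) = exp (- l * s) * (1 - exp (- l * K))"
    by (simp add: algebra_simps exp_add[symmetric])
  also have "\<dots> \<le> 1 * (1 - exp (- l * K))"
    using True assms by (intro mult_right_mono) auto
  finally show ?thesis using True assms(2) by (simp add: erlang_CDF_0)
next
  case False
  have "exp (- l * K) \<le> exp (- l * (s + K))" if "0 \<le> s + K" using False assms(1) by simp
  moreover have "exp (- l * K) \<le> 1" using assms by simp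
  ultimately show ?thesis using False by (simp add: erlang_CDF_0)
qed

lemma measure_exponential_interval_le:
  assumes "0 < l" "0 \<le> K"
  shows "measure (density lborel (exponential_density l)) {s<..<s + K} \<le> 1 - exp (- l * K)"
proof -
  let ?N = "density lborel (exponential_density l)"
  interpret prob_space ?N using assms(1) by (rule prob_space_exponential_density)
  have cdf: "measure ?N {..x} = erlang_CDF 0 l x" for x
    using emeasure_erlang_density[OF assms(1), of 0 x] assms(1) by (simp add: measure_def)
  have "measure ?N {s<..<s + K} \<le> measure ?N ({..s + K} - {..s})"
    by (intro finite_measure_mono) auto
  also have "\<dots> = measure ?N {..s + K} - measure ?N {..s}"
    using assms(2) by (intro finite_measure_Diff) auto
  also have "\<dots> \<le> 1 - exp (- l * K)"
    unfolding cdf using assms by (rule erlang_CDF_0_increment_le)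
  finally show ?thesis .
qed

lemma AE_exponential_density_pos:
  assumes "0 < l"
  shows "AE x in density lborel (exponential_density l). 0 < x"
proof (rule AE_I')
  show "{..0} \<in> null_sets (density lborel (exponential_density l))"
    using emeasure_erlang_density[OF assms, of 0 0] by (intro null_setsI) (auto simp: erlang_CDF_0)
qed auto

lemma integral_le_const_plus_indicator:
  fixes f :: "'a \<Rightarrow> real"
  assumes "prob_space N" "B \<in> sets N" "0 \<le> a" "0 \<le> b"
    and "AE x in N. f x \<le> a + b * indicator B x"
  shows "integral\<^sup>L N f \<le> a + b * measure N B"
proof -
  interpret prob_space N by (fact assms(1))
  have indicator_integrable: "integrable N (indicator B :: 'a \<Rightarrow> real)"
    using assms(2) emeasure_finite[of B] by (intro integrable_real_indicator) (simp_all add: less_top[symmetric])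
  then have bound_integrable: "integrable N (\<lambda>x. a + b * indicator B x)" by simp
  have "integral\<^sup>L N f \<le> (\<integral>x. a + b * indicator B x \<partial>N)"
    using bound_integrable assms(5) by (rule integral_mono_AE') (use assms(3,4) in simp)
  also have "\<dots> = a + b * measure N B"
    using indicator_integrable assms(2) by (simp add: Bochner_Integration.integral_add prob_space)
  finally show ?thesis .
qed

lemma integral_exponential_le_off_window:
  fixes f :: "real \<Rightarrow> real"
  assumes "0 < l" "0 \<le> K" and "\<And>g. 0 < g \<Longrightarrow> f g \<le> 1/2 + 1/2 * indicator {s<..<s + K} g"
  shows "(\<integral>g. f g \<partial>density lborel (exponential_density l)) \<le> 1 - 1/2 * exp (- l * K)"
proof -
  have "(\<integral>g. f g \<partial>density lborel (exponential_density l))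
          \<le> 1/2 + 1/2 * measure (density lborel (exponential_density l)) {s<..<s + K}"
    using AE_exponential_density_pos[OF assms(1)] assms(3)
    by (intro integral_le_const_plus_indicator prob_space_exponential_density assms(1))
      (auto elim: AE_mp)
  also have "\<dots> \<le> 1/2 + 1/2 * (1 - exp (- l * K))"
    using measure_exponential_interval_le[OF assms(1,2)] by simp
  finally show ?thesis by (simp add: field_simps)
qed

section \<open>A single race\<close>

text \<open>The honest block is published at tH by miner h. plan is the attacker's publication
  schedule for partial PoWs, fixed in advance; pub, the publication times in this outcome,
  agree with it before tH.\<close>
locale match_scenario =
  fixes M :: "'m set" and drift :: "'m \<Rightarrow> real" and valid :: "'p \<Rightarrow> bool"
    and dB dP D :: real and h :: 'm and tH :: real
    and pub plan :: "'p \<Rightarrow> real option" and arr :: "'m \<Rightarrow> 'p \<Rightarrow> real option"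
    and bA bH :: "'m \<Rightarrow> real"
  assumes dB_nonneg: "0 \<le> dB" and dP_nonneg: "0 \<le> dP" and D_lt1: "D < 1"
    and drift_bound: "\<And>i. i \<in> M \<Longrightarrow> \<bar>drift i\<bar> < D"
    and honest_miner: "h \<in> M"
    and pub_plan: "\<And>p t. t < tH \<Longrightarrow> pub p = Some t \<longleftrightarrow> plan p = Some t"
    and arrival_after_pub: "\<And>i p t. i \<in> M \<Longrightarrow> valid p \<Longrightarrow> pub p = Some t \<Longrightarrow>
          \<exists>a. arr i p = Some a \<and> t \<le> a \<and> a < t + dP"
    and pub_before_arrival: "\<And>i p a. i \<in> M \<Longrightarrow> valid p \<Longrightarrow> arr i p = Some a \<Longrightarrow>
          \<exists>t. pub p = Some t \<and> t \<le> a"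
    and blocks_arrival: "\<And>i. i \<in> M \<Longrightarrow>
          tH \<le> bA i \<and> bA i < tH + dB \<and> tH \<le> bH i \<and> bH i < tH + dB"
    and honest_set_finite: "finite (honest_set valid dB dP D (drift h) (arr h) tH)"
begin

abbreviation honest_ppows :: "'p set" where
  "honest_ppows \<equiv> honest_set valid dB dP D (drift h) (arr h) tH"

abbreviation shared_for :: "'m \<Rightarrow> 'p \<Rightarrow> bool" where
  "shared_for i \<equiv> sufficiently_shared valid dB D (drift i) (arr i)
                    (decision_time dB D (drift i) (bA i) (bH i))"

lemma planned_before_if_shared:
  assumes "i \<in> M" "shared_for i q"
  obtains t where "plan q = Some t" "t < tH"
proof -
  obtain a where a: "valid q" "arr i q = Some a" "a \<le> min (bA i) (bH i) - dB"
    by (rule arrival_before_window_if_sufficiently_shared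
          [OF drift_bound[OF assms(1)] D_lt1 dB_nonneg assms(2)])
  obtain t where t: "pub q = Some t" "t \<le> a"
    using pub_before_arrival[OF assms(1) a(1,2)] by blast
  have "min (bA i) (bH i) < tH + dB" using blocks_arrival[OF assms(1)] by auto
  then have "t < tH" using a(3) t(2) by simp
  then show ?thesis using that pub_plan t(1) by blast
qed

lemma shared_if_honest:
  assumes "i \<in> M" "p \<in> honest_ppows"
  shows "shared_for i p"
proof -
  obtain a where a: "valid p" "arr h p = Some a" "a \<le> tH - (dP + 2 * dB * (1 + D) / (1 - D))"
    by (rule arrival_before_if_in_honest_set
          [OF drift_bound[OF honest_miner] D_lt1 dB_nonneg dP_nonneg assms(2)])
  obtain t where t: "pub p = Some t" "t \<le> a"
    using pub_before_arrival[OF honest_miner a(1,2)] by blast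
  obtain a' where a': "arr i p = Some a'" "a' < t + dP"
    using arrival_after_pub[OF assms(1) a(1) t(1)] by blast
  have "tH \<le> decision_time dB D (drift i) (bA i) (bH i)"
    using decision_time_ge[OF drift_bound[OF assms(1)] D_lt1 dB_nonneg, of "bA i" "bH i"]
      blocks_arrival[OF assms(1)] by linarith
  then have "a' \<le> decision_time dB D (drift i) (bA i) (bH i) - 2 * dB * (1 + D) / (1 - D)"
    using a(3) t(2) a'(2) by linarith
  then show ?thesis
    by (rule sufficiently_shared_if_arrived_early[where valid = valid and p = p and arri = "arr i",
          OF drift_bound[OF assms(1)] D_lt1 dB_nonneg a(1) a'(1)])
qed

lemma late_if_not_honest:
  assumes "valid p" "plan p = Some tp" "tp < tH" "p \<notin> honest_ppows"
  shows "tH < tp + attack_window dB dP D"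
proof -
  have "pub p = Some tp" using pub_plan assms(2,3) by blast
  then obtain a where "arr h p = Some a" "a < tp + dP"
    using arrival_after_pub[OF honest_miner assms(1)] by blast
  then show ?thesis
    by (rule late_if_not_in_honest_set[OF drift_bound[OF honest_miner] D_lt1 dB_nonneg dP_nonneg
          assms(1) _ _ assms(4)])
qed

text \<open>If SA is empty or partly unplanned, m is a junk value; this is harmless because the
  attacker's chain can then never be the heavier one.\<close>
lemma prob_on_attacker_le_half_outside_window:
  assumes "i \<in> M" "finite C" "finite SA"
  defines "m \<equiv> Max ((\<lambda>q. the (plan q)) ` SA)"
  assumes "tH \<notin> {m<..<m + attack_window dB dP D}"
  shows "prob_on_attacker valid dB D (drift i) (arr i) (bA i) (bH i) (C \<union> SA) (C \<union> honest_ppows)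
           \<le> 1/2"
proof (rule ccontr)
  let ?w = "chain_weight valid dB D (drift i) (arr i) (decision_time dB D (drift i) (bA i) (bH i))"
  assume "\<not> ?thesis"
  then have heavier: "?w (C \<union> honest_ppows) < ?w (C \<union> SA)"
    using prob_on_attacker_le_half[OF drift_bound[OF assms(1)]] blocks_arrival[OF assms(1)]
    by (meson not_le)
  have shared: "shared_for i q" if "q \<in> C \<union> SA" for q
    using sufficiently_shared_if_chain_weight_less[OF heavier that] .
  have planned: "\<exists>t. plan q = Some t \<and> t < tH" if "q \<in> SA" for q
    using planned_before_if_shared[OF assms(1) shared] that by blast
  have "\<not> C \<union> SA \<subseteq> C \<union> honest_ppows"
    using not_subset_if_chain_weight_less[OF _ _ heavier] shared shared_if_honest[OF assms(1)]
      assms(2) honest_set_finite by blast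
  then obtain p where p: "p \<in> SA" "p \<notin> honest_ppows" by blast
  then obtain tp where tp: "plan p = Some tp" "tp < tH" using planned by blast
  have "valid p" using shared[of p] p(1) by (simp add: sufficiently_shared_def)
  have "tH < tp + attack_window dB dP D" by (rule late_if_not_honest[OF \<open>valid p\<close> tp p(2)])
  moreover have "tp \<le> m" unfolding m_def using assms(3) p(1) tp(1) by (force intro: Max_ge)
  moreover have "m < tH"
  proof -
    have "m \<in> (\<lambda>q. the (plan q)) ` SA" unfolding m_def using assms(3) p(1) by (intro Max_in) auto
    then show ?thesis using planned by force
  qed
  ultimately show False using assms(5) by auto
qed

lemma match_gamma_le:
  assumes "\<forall>i\<in>M. 0 \<le> hr i" "(\<Sum>i\<in>M. hr i) = 1" "finite C" "finite SA"
  defines "m \<equiv> Max ((\<lambda>q. the (plan q)) ` SA)"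
  shows "match_gamma M hr drift valid dB dP D C SA h tH arr bA bH
           \<le> 1/2 + 1/2 * indicator {m<..<m + attack_window dB dP D} tH"
proof (cases "tH \<in> {m<..<m + attack_window dB dP D}")
  case True
  have "match_gamma M hr drift valid dB dP D C SA h tH arr bA bH \<le> 1"
    unfolding match_gamma_def using assms(1,2) prob_on_attacker_le_one
    by (intro weighted_mean_le) auto
  with True show ?thesis by simp
next
  case False
  have "match_gamma M hr drift valid dB dP D C SA h tH arr bA bH \<le> 1/2"
    unfolding match_gamma_def
    using assms(1,2) prob_on_attacker_le_half_outside_window[OF _ assms(3,4) False[unfolded m_def]]
    by (intro weighted_mean_le) auto
  with False show ?thesis by simp
qed

end

theorem lemma4:
  fixes M :: "'m set" and hr :: "'m \<Rightarrow> real" and drift :: "'m \<Rightarrow> real"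
    and H :: "'p \<Rightarrow> real" and n Target :: real
    and T dB dP D alpha tA :: real
    and found :: "'p \<Rightarrow> real" and plan :: "'p \<Rightarrow> real option"
    and SA C :: "'p set"
    and hm :: "real \<Rightarrow> 'm"
    and pub :: "real \<Rightarrow> 'p \<Rightarrow> real option"
    and arr :: "real \<Rightarrow> 'm \<Rightarrow> 'p \<Rightarrow> real option"
    and bA bH :: "real \<Rightarrow> 'm \<Rightarrow> real"
  assumes T_pos: "T > 0" and dB_pos: "dB > 0" and dP_pos: "dP > 0"
    and D_pos: "0 < D" and D_lt1: "D < 1" and n_gt1: "n > 1" and Target_pos: "Target > 0"
    and alpha: "0 \<le> alpha" "alpha < 1"
    and M_fin: "finite M" and hr_nonneg: "\<forall>i\<in>M. hr i \<ge> 0" and hr_sum: "(\<Sum>i\<in>M. hr i) = 1"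
    and drift_bound: "\<forall>i\<in>M. \<bar>drift i\<bar> < D"
    and found_fin: "\<forall>t. finite {p. valid_ppow H n Target p \<and> found p \<le> t}"
    and SA_fin: "finite SA" and C_fin: "finite C"
    and SA_found: "\<forall>p\<in>SA. valid_ppow H n Target p \<longrightarrow> found p \<le> tA"
    and plan_found: "\<forall>p t. plan p = Some t \<longrightarrow> found p \<le> t"
    and scen: "\<forall>g>0.
         hm g \<in> M
       \<and> (\<forall>p t. pub g p = Some t \<longrightarrow> found p \<le> t)
       \<and> (\<forall>p t. t < tA + g \<longrightarrow> (pub g p = Some t \<longleftrightarrow> plan p = Some t))
       \<and> (\<forall>i\<in>M. \<forall>p t. valid_ppow H n Target p \<longrightarrow> pub g p = Some t \<longrightarrow>
              (\<exists>a. arr g i p = Some a \<and> t \<le> a \<and> a < t + dP))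
       \<and> (\<forall>i\<in>M. \<forall>p a. valid_ppow H n Target p \<longrightarrow> arr g i p = Some a \<longrightarrow>
              (\<exists>t. pub g p = Some t \<and> t \<le> a))
       \<and> (\<forall>i\<in>M. tA + g \<le> bH g i \<and> bH g i < tA + g + dB
                \<and> tA + g \<le> bA g i \<and> bA g i < tA + g + dB)
       \<and> bH g (hm g) = tA + g"
    and meas: "(\<lambda>g. match_gamma M hr drift (valid_ppow H n Target) dB dP D C SA
                      (hm g) (tA + g) (arr g) (bA g) (bH g)) \<in> borel_measurable borel"
  shows "(\<integral>g. match_gamma M hr drift (valid_ppow H n Target) dB dP D C SA
                 (hm g) (tA + g) (arr g) (bA g) (bH g)
            \<partial>(density lborel (exponential_density ((1 - alpha) / T))))
         \<le> 1 - 1/2 * exp (- (dB * (2 * (1 + D)^2 / (1 - D)^2) + dP * (2 / (1 - D))) / T)"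
proof -
  define K where "K = attack_window dB dP D"
  define lam where "lam = (1 - alpha) / T"
  define s where "s = Max ((\<lambda>q. the (plan q)) ` SA) - tA"
  let ?gamma = "\<lambda>g. match_gamma M hr drift (valid_ppow H n Target) dB dP D C SA
                      (hm g) (tA + g) (arr g) (bA g) (bH g)"
  have lam_pos: "0 < lam" using alpha T_pos by (simp add: lam_def)
  have K_nonneg: "0 \<le> K" using dB_pos dP_pos D_lt1 by (simp add: K_def attack_window_nonneg)
  have gamma_le: "?gamma g \<le> 1/2 + 1/2 * indicator {s<..<s + K} g" if "0 < g" for g
  proof -
    note sc = scen[rule_format, OF that]
    have found_le_arrival: "found p \<le> a"
      if "valid_ppow H n Target p" "arr g (hm g) p = Some a" for p a
      using sc that by force
    interpret match_scenario M drift "valid_ppow H n Target" dB dP D "hm g" "tA + g"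
        "pub g" plan "arr g" "bA g" "bH g"
      using sc dB_pos dP_pos D_lt1 drift_bound
        finite_subset[OF honest_set_subset_found[OF found_le_arrival] found_fin[rule_format]]
      by unfold_locales auto
    have "tA + g \<in> {s + tA<..<s + tA + K} \<longleftrightarrow> g \<in> {s<..<s + K}" by auto
    then show ?thesis
      using match_gamma_le[OF hr_nonneg hr_sum C_fin SA_fin]
      by (simp add: s_def K_def indicator_def split: if_splits)
  qed
  have "(\<integral>g. ?gamma g \<partial>density lborel (exponential_density lam)) \<le> 1 - 1/2 * exp (- lam * K)"
    by (rule integral_exponential_le_off_window[OF lam_pos K_nonneg gamma_le])
  also have "\<dots> \<le> 1 - 1/2 * exp (- K / T)"
  proof -
    have "lam * K \<le> K / T"
      using alpha T_pos K_nonneg by (simp add: lam_def field_simps mult_right_le_one_le)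
    then show ?thesis by simp
  qed
  finally show ?thesis by (simp add: K_def lam_def attack_window_def)
qed

end
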